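(* Let $s(t)\in\mathbb{R}^n$ and $\tilde a(t)\in\mathbb{R}^h$ evolve according to $$\begin{bmatrix} M & 0\\ 0 & P^{-1}\end{bmatrix}\begin{bmatrix}\dot s\\ \dot{\tilde a}\end{bmatrix} + \begin{bmatrix} C+K & \phi\\ -\phi^\top & \phi^\top R^{-1}\phi + \lambda P^{-1}\end{bmatrix}\begin{bmatrix} s\\ \tilde a\end{bmatrix} = \begin{bmatrix} d\\ \phi^\top R^{-1}\bar\epsilon - P^{-1}\lambda a - P^{-1}\dot a\end{bmatrix},$$ $$\frac{d}{dt}\big(P^{-1}\big) = P^{-1}\big(2\lambda P - Q + P\phi^\top R^{-1}\phi P\big)P^{-1},$$ and assume $P^{-1}$ is uniformly positive definite and uniformly bounded. Define $\mathcal{M} = \begin{bmatrix} M & 0\\ 0 & P^{-1}\end{bmatrix}$. Then there is a constant $\alpha>0$, depending on $\phi, R, Q, K, M$ and $\lambda$, such that $\left\|\begin{bmatrix} s\\ \tilde a\end{bmatrix}\right\|$ converges exponentially with rate $\alpha$ to the bound $$\lim_{t\to\infty}\left\|\begin{bmatrix} s\\ \tilde a\end{bmatrix}\right\| \le \frac{1}{\alpha\,\lambda_{\min}(\mathcal{M})}\Big(\sup_t\|d\| + \sup_t\|\phi^\top R^{-1}\bar\epsilon\| + \lambda_{\max}(P^{-1})\sup_t\|\lambda a + \dot a\|\Big).$$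
   Context: $M=M(q(t))$ is a uniformly positive definite, uniformly bounded symmetric inertia matrix and $C$ the Coriolis matrix with $\dot M - 2C$ skew-symmetric; $K$ is a uniformly positive definite, bounded gain matrix; $Q$ and $R$ are positive definite gain matrices (with $Q$ uniformly positive definite); $\lambda\ge 0$ is a damping gain; $\phi(t)\in\mathbb{R}^{n\times h}$ is a bounded time-varying matrix; $a(t)$ is a differentiable parameter vector; $d(t)$ and $\bar\epsilon(t)$ are bounded disturbance signals. $\lambda_{\min}(\cdot)$ and $\lambda_{\max}(\cdot)$ denote the minimum and maximum eigenvalue of the argument over all time. *)

theory Defs
  imports "HOL-Analysis.Analysis"
begin

text \<open>Time ranges over t \<ge> 0. Matrices are real^'c^'r (rows 'r, columns 'c).\<close>

definition unif_pd :: "(real \<Rightarrow> real^'k^'k) \<Rightarrow> bool" where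
  "unif_pd A \<longleftrightarrow> (\<exists>c>0. \<forall>t\<ge>0. \<forall>x. c * (norm x)\<^sup>2 \<le> x \<bullet> (A t *v x))"

definition unif_bdd :: "(real \<Rightarrow> 'a::real_normed_vector) \<Rightarrow> bool" where
  "unif_bdd f \<longleftrightarrow> (\<exists>B. \<forall>t\<ge>0. norm (f t) \<le> B)"

definition eigvals :: "real^'k^'k \<Rightarrow> real set" where
  "eigvals A = {\<mu>. \<exists>v. v \<noteq> 0 \<and> A *v v = \<mu> *\<^sub>R v}"

definition lam_min :: "real^'k^'k \<Rightarrow> real" where
  "lam_min A = Min (eigvals A)"

definition lam_max :: "real^'k^'k \<Rightarrow> real" where
  "lam_max A = Max (eigvals A)"

definition lam_min_all :: "(real \<Rightarrow> real^'k^'k) \<Rightarrow> real" where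
  "lam_min_all A = Inf ((\<lambda>t. lam_min (A t)) ` {0..})"

definition lam_max_all :: "(real \<Rightarrow> real^'k^'k) \<Rightarrow> real" where
  "lam_max_all A = Sup ((\<lambda>t. lam_max (A t)) ` {0..})"

definition sup_norm :: "(real \<Rightarrow> 'a::real_normed_vector) \<Rightarrow> real" where
  "sup_norm f = Sup ((\<lambda>t. norm (f t)) ` {0..})"

definition block_diag :: "real^'n^'n \<Rightarrow> real^'h^'h \<Rightarrow> real^('n + 'h)^('n + 'h)" where
  "block_diag A B = (\<chi> i j. case (i, j) of (Inl a, Inl b) \<Rightarrow> A $ a $ b
                                         | (Inr a, Inr b) \<Rightarrow> B $ a $ b
                                         | _ \<Rightarrow> 0)"

definition stack :: "real^'n \<Rightarrow> real^'h \<Rightarrow> real^('n + 'h)" where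
  "stack x y = (\<chi> i. case i of Inl a \<Rightarrow> x $ a | Inr b \<Rightarrow> y $ b)"

end

theory Submission
  imports Defs
begin

text \<open>With \<open>W = s\<bullet>M s + atil\<bullet>P\<^sup>-\<^sup>1 atil\<close>, the skew-symmetry of \<open>M' - 2C\<close> and the
  Riccati-type law for \<open>P\<^sup>-\<^sup>1\<close> make the cross terms \<open>\<plusminus>2 s\<bullet>\<phi> atil\<close> cancel, so that
  \<open>W' = 2 s\<bullet>d - 2 s\<bullet>K s - (\<phi> atil)\<bullet>R\<^sup>-\<^sup>1(\<phi> atil) - (P\<^sup>-\<^sup>1atil)\<bullet>Q(P\<^sup>-\<^sup>1atil)
    + 2 atil\<bullet>(\<phi>\<^sup>T R\<^sup>-\<^sup>1\<epsilon> - P\<^sup>-\<^sup>1(lam a + a'))\<close>.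
  Uniform positivity of \<open>K, Q, P\<^sup>-\<^sup>1\<close> gives \<open>W' \<le> -\<beta> N\<^sup>2 + 2 N D\<close> for \<open>N = \<parallel>(s, atil)\<parallel>\<close> and \<open>D\<close>
  the disturbance level of the bound, while \<open>\<lambda>\<^sub>m\<^sub>i\<^sub>n N\<^sup>2 \<le> W \<le> m N\<^sup>2\<close>; the comparison principle for
  the resulting linear differential inequality then yields exponential convergence of \<open>N\<close>
  to the ball of radius \<open>D/(\<alpha> \<lambda>\<^sub>m\<^sub>i\<^sub>n)\<close>. The factor \<open>\<lambda>\<^sub>m\<^sub>a\<^sub>x(P\<^sup>-\<^sup>1)\<close> in \<open>D\<close> comes from
  \<open>\<parallel>P\<^sup>-\<^sup>1 y\<parallel> \<le> \<lambda>\<^sub>m\<^sub>a\<^sub>x(P\<^sup>-\<^sup>1) \<parallel>y\<parallel>\<close> for the symmetric positive definite \<open>P\<^sup>-\<^sup>1\<close>.\<close>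

section \<open>Matrices and quadratic forms\<close>

lemma norm_matrix_vector_mult_le: "norm ((A::real^'n^'m) *v x) \<le> norm A * norm x"
proof -
  have "(norm (A *v x))\<^sup>2 = (\<Sum>i\<in>UNIV. ((A *v x) $ i)\<^sup>2)"
    by (simp add: norm_vec_def L2_set_def sum_nonneg)
  also have "\<dots> \<le> (\<Sum>i\<in>UNIV. (norm (A $ i))\<^sup>2 * (norm x)\<^sup>2)"
  proof (rule sum_mono)
    fix i
    have "\<bar>(A *v x) $ i\<bar> \<le> norm (A $ i) * norm x"
      by (simp add: matrix_vector_mul_component Cauchy_Schwarz_ineq2)
    then show "((A *v x) $ i)\<^sup>2 \<le> (norm (A $ i))\<^sup>2 * (norm x)\<^sup>2"
      by (metis abs_ge_zero power2_abs power_mono power_mult_distrib)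
  qed
  also have "\<dots> = (norm A * norm x)\<^sup>2"
    by (simp add: norm_vec_def L2_set_def sum_nonneg power_mult_distrib sum_distrib_right)
  finally show ?thesis
    by (rule power2_le_imp_le) simp
qed

lemma bounded_bilinear_matrix_vector_mult: "bounded_bilinear (\<lambda>(A::real^'n^'m) x. A *v x)"
proof
  fix A A' :: "real^'n^'m" and x x' :: "real^'n" and r :: real
  show "(A + A') *v x = A *v x + A' *v x" by (simp add: matrix_vector_mult_add_rdistrib)
  show "A *v (x + x') = A *v x + A *v x'" by (simp add: matrix_vector_right_distrib)
  show "(r *\<^sub>R A) *v x = r *\<^sub>R (A *v x)" by (simp add: scaleR_matrix_vector_assoc)
  show "A *v (r *\<^sub>R x) = r *\<^sub>R (A *v x)" by (simp add: matrix_vector_mult_scaleR)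
next
  show "\<exists>K. \<forall>A x. norm ((A::real^'n^'m) *v x) \<le> norm A * norm x * K"
    using norm_matrix_vector_mult_le by (metis mult.right_neutral)
qed

lemma norm_transpose: "norm (transpose (A::real^'n^'m)) = norm A"
proof -
  have "(norm (transpose A))\<^sup>2 = (norm A)\<^sup>2"
    unfolding norm_vec_def L2_set_def transpose_def
    by (simp add: sum_nonneg) (subst sum.swap, simp)
  then show ?thesis by (simp add: power2_eq_iff_nonneg)
qed

lemma inner_matrix_vector_mult: "(x::real^'m) \<bullet> ((A::real^'n^'m) *v y) = (transpose A *v x) \<bullet> y"
  by (metis dot_lmul_matrix transpose_matrix_vector)

lemma inner_symmetric_matrix:
  assumes "transpose A = (A::real^'n^'n)"
  shows "x \<bullet> (A *v y) = y \<bullet> (A *v x)"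
  by (metis assms inner_matrix_vector_mult inner_commute)

lemma quadratic_form_skew_eq_0:
  assumes "transpose B = - (B::real^'n^'n)"
  shows "x \<bullet> (B *v x) = 0"
proof -
  have "(- B) *v x = - (B *v x)"
    by (simp add: vec_eq_iff matrix_vector_mult_def sum_negf)
  then have "x \<bullet> (B *v x) = - (x \<bullet> (B *v x))"
    by (metis assms inner_matrix_vector_mult inner_commute inner_minus_left)
  then show ?thesis by simp
qed

lemma quadratic_form_le_norm: "x \<bullet> ((A::real^'n^'n) *v x) \<le> norm A * (norm x)\<^sup>2"
proof -
  have "x \<bullet> (A *v x) \<le> norm x * (norm A * norm x)"
    by (meson norm_cauchy_schwarz norm_matrix_vector_mult_le mult_left_mono norm_ge_zero order_trans)
  then show ?thesis by (simp add: power2_eq_square mult_ac)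
qed

lemma norm_matrix_vector_mult_ge:
  assumes "c * (norm x)\<^sup>2 \<le> x \<bullet> ((A::real^'n^'n) *v x)"
  shows "c * norm x \<le> norm (A *v x)"
proof (cases "x = 0")
  case False
  have "norm x * (c * norm x) \<le> norm x * norm (A *v x)"
    using assms norm_cauchy_schwarz[of x "A *v x"] by (simp add: power2_eq_square mult_ac)
  then show ?thesis using False by simp
qed simp

lemma pos_def_invertible:
  assumes "\<forall>x. x \<noteq> 0 \<longrightarrow> x \<bullet> ((A::real^'n^'n) *v x) > 0"
  shows "invertible A"
proof -
  have "\<forall>x. A *v x = 0 \<longrightarrow> x = 0" using assms by force
  then show ?thesis using matrix_left_invertible_ker invertible_left_inverse by blast
qed

lemma invertible_matrix_inv:
  assumes "invertible (A::real^'n^'n)"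
  shows matrix_inv_right: "A ** matrix_inv A = mat 1"
    and matrix_inv_left: "matrix_inv A ** A = mat 1"
  using someI_ex[OF assms[unfolded invertible_def]] unfolding matrix_inv_def by auto

lemma pos_def_matrix_inv_nonneg:
  assumes "\<forall>x. x \<noteq> 0 \<longrightarrow> x \<bullet> ((R::real^'n^'n) *v x) > 0"
  shows "0 \<le> y \<bullet> (matrix_inv R *v y)"
proof -
  define z where "z = matrix_inv R *v y"
  have "y = R *v z"
    unfolding z_def
    by (simp add: matrix_vector_mul_assoc matrix_inv_right[OF pos_def_invertible[OF assms]])
  moreover have "0 \<le> z \<bullet> (R *v z)"
    using assms by (cases "z = 0") (auto intro: less_imp_le)
  ultimately show ?thesis by (simp add: z_def inner_commute)
qed

section \<open>Eigenvalues of symmetric matrices\<close>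

lemma nonneg_quadratic_imp_linear_coeff_0:
  fixes b k :: real
  assumes "\<forall>t. 0 \<le> 2 * t * b + t\<^sup>2 * k" "k \<ge> 0"
  shows "b = 0"
proof (rule ccontr)
  assume "b \<noteq> 0"
  have "0 \<le> 2 * (- b / (k + 1)) * b + (- b / (k + 1))\<^sup>2 * k" using assms(1) by blast
  also have "\<dots> = b\<^sup>2 * (- k - 2) / (k + 1)\<^sup>2"
    using assms(2) by (simp add: power_divide) (simp add: divide_simps power2_eq_square; algebra)
  also have "\<dots> < 0" using \<open>b \<noteq> 0\<close> assms(2)
    by (intro divide_neg_pos mult_pos_neg) auto
  finally show False by simp
qed

lemma quadratic_form_attains_min_on_sphere:
  "\<exists>v. norm v = 1 \<and> (\<forall>x. (v \<bullet> (A *v v)) * (norm x)\<^sup>2 \<le> x \<bullet> ((A::real^'n^'n) *v x))"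
proof -
  have "continuous_on (sphere 0 1) (\<lambda>x::real^'n. x \<bullet> (A *v x))"
    by (intro continuous_intros linear_continuous_on matrix_vector_mul_bounded_linear)
  then obtain v where v: "v \<in> sphere 0 1" "\<forall>y\<in>sphere 0 1. v \<bullet> (A *v v) \<le> y \<bullet> (A *v y)"
    using continuous_attains_inf[OF compact_sphere, of 0 1] by fastforce
  have "(v \<bullet> (A *v v)) * (norm x)\<^sup>2 \<le> x \<bullet> (A *v x)" for x
  proof (cases "x = 0")
    case False
    then have "x /\<^sub>R norm x \<in> sphere 0 1" by simp
    then have "v \<bullet> (A *v v) \<le> (x /\<^sub>R norm x) \<bullet> (A *v (x /\<^sub>R norm x))" using v by blast
    also have "\<dots> = (x \<bullet> (A *v x)) / (norm x)\<^sup>2"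
      using False by (simp add: matrix_vector_mult_scaleR power2_eq_square field_simps)
    finally show ?thesis using False by (simp add: field_simps)
  qed simp
  then show ?thesis using v by auto
qed

text \<open>A minimiser of the Rayleigh quotient is an eigenvector: the first variation of the
  quadratic form at it vanishes in every direction.\<close>
lemma symmetric_matrix_min_eigenvector:
  assumes sym: "transpose A = (A::real^'n^'n)"
  shows "\<exists>v \<mu>. v \<noteq> 0 \<and> A *v v = \<mu> *\<^sub>R v \<and> (\<forall>x. \<mu> * (norm x)\<^sup>2 \<le> x \<bullet> (A *v x))"
proof -
  obtain v where "norm v = 1" and v_min: "\<forall>x. (v \<bullet> (A *v v)) * (norm x)\<^sup>2 \<le> x \<bullet> (A *v x)"
    using quadratic_form_attains_min_on_sphere by blast
  define \<mu> where "\<mu> = v \<bullet> (A *v v)"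
  have min: "\<mu> * (norm x)\<^sup>2 \<le> x \<bullet> (A *v x)" for x
    using v_min \<mu>_def by blast
  have vv: "v \<bullet> v = 1" using \<open>norm v = 1\<close> by (simp add: dot_square_norm)
  have first_variation: "w \<bullet> (A *v v - \<mu> *\<^sub>R v) = 0" for w
  proof (rule nonneg_quadratic_imp_linear_coeff_0)
    show "0 \<le> w \<bullet> (A *v w) - \<mu> * (norm w)\<^sup>2" using min[of w] by simp
    show "\<forall>t. 0 \<le> 2 * t * (w \<bullet> (A *v v - \<mu> *\<^sub>R v)) + t\<^sup>2 * (w \<bullet> (A *v w) - \<mu> * (norm w)\<^sup>2)"
    proof
      fix t
      have "(norm (v + t *\<^sub>R w))\<^sup>2 = 1 + 2 * t * (v \<bullet> w) + t\<^sup>2 * (norm w)\<^sup>2"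
        unfolding power2_norm_eq_inner
        by (simp add: inner_add vv inner_commute algebra_simps power2_eq_square)
      moreover have "(v + t *\<^sub>R w) \<bullet> (A *v (v + t *\<^sub>R w))
          = \<mu> + 2 * t * (w \<bullet> (A *v v)) + t\<^sup>2 * (w \<bullet> (A *v w))"
        using inner_symmetric_matrix[OF sym, of v w]
        by (simp add: \<mu>_def matrix_vector_right_distrib matrix_vector_mult_scaleR inner_add
            power2_eq_square algebra_simps)
      ultimately show "0 \<le> 2 * t * (w \<bullet> (A *v v - \<mu> *\<^sub>R v)) + t\<^sup>2 * (w \<bullet> (A *v w) - \<mu> * (norm w)\<^sup>2)"
        using min[of "v + t *\<^sub>R w"]
        by (simp add: inner_diff_right inner_commute[of w v] algebra_simps power2_eq_square)
    qed
  qed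
  have "A *v v = \<mu> *\<^sub>R v"
    using first_variation[of "A *v v - \<mu> *\<^sub>R v"] by simp
  moreover have "v \<noteq> 0" using \<open>norm v = 1\<close> by auto
  ultimately show ?thesis using min by blast
qed

lemma symmetric_matrix_eigenvectors_orthogonal:
  assumes sym: "transpose A = (A::real^'n^'n)"
    and "A *v v = \<mu> *\<^sub>R v" "A *v w = \<nu> *\<^sub>R w" "\<mu> \<noteq> \<nu>"
  shows "v \<bullet> w = 0"
proof -
  have "\<nu> * (v \<bullet> w) = v \<bullet> (A *v w)" using assms by simp
  also have "\<dots> = w \<bullet> (A *v v)" by (rule inner_symmetric_matrix[OF sym])
  also have "\<dots> = \<mu> * (v \<bullet> w)" using assms by (simp add: inner_commute)
  finally show ?thesis using assms(4) by simp
qed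

lemma finite_eigvals_symmetric:
  assumes sym: "transpose A = (A::real^'n^'n)"
  shows "finite (eigvals A)"
proof -
  define f where "f \<mu> = (SOME v. v \<noteq> 0 \<and> A *v v = \<mu> *\<^sub>R v)" for \<mu>
  have f: "f \<mu> \<noteq> 0 \<and> A *v f \<mu> = \<mu> *\<^sub>R f \<mu>" if "\<mu> \<in> eigvals A" for \<mu>
    using that unfolding eigvals_def f_def by (metis (mono_tags, lifting) mem_Collect_eq someI_ex)
  have "inj_on f (eigvals A)"
    by (rule inj_onI) (metis f scaleR_cancel_right)
  moreover have "independent (f ` eigvals A)"
  proof (rule pairwise_orthogonal_independent)
    show "pairwise orthogonal (f ` eigvals A)"
      unfolding pairwise_def orthogonal_def
      using f symmetric_matrix_eigenvectors_orthogonal[OF sym] by (metis imageE)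
    show "0 \<notin> f ` eigvals A" using f by auto
  qed
  ultimately show ?thesis
    using independent_bound finite_imageD by blast
qed

lemma symmetric_matrix_lam_min_lam_max:
  assumes sym: "transpose A = (A::real^'n^'n)"
  shows lam_min_in_eigvals: "lam_min A \<in> eigvals A"
    and lam_max_in_eigvals: "lam_max A \<in> eigvals A"
    and lam_min_le_eigval: "\<mu> \<in> eigvals A \<Longrightarrow> lam_min A \<le> \<mu>"
    and eigval_le_lam_max: "\<mu> \<in> eigvals A \<Longrightarrow> \<mu> \<le> lam_max A"
proof -
  have "eigvals A \<noteq> {}"
    using symmetric_matrix_min_eigenvector[OF sym] unfolding eigvals_def by blast
  then show "lam_min A \<in> eigvals A" "lam_max A \<in> eigvals A"
    "\<mu> \<in> eigvals A \<Longrightarrow> lam_min A \<le> \<mu>" "\<mu> \<in> eigvals A \<Longrightarrow> \<mu> \<le> lam_max A"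
    using finite_eigvals_symmetric[OF sym] unfolding lam_min_def lam_max_def by auto
qed

lemma eigval_ge_quadratic_bound:
  assumes "\<mu> \<in> eigvals A" "\<forall>x. c * (norm x)\<^sup>2 \<le> x \<bullet> ((A::real^'n^'n) *v x)"
  shows "c \<le> \<mu>"
proof -
  obtain v where v: "v \<noteq> 0" "A *v v = \<mu> *\<^sub>R v" using assms(1) unfolding eigvals_def by auto
  have "c * (norm v)\<^sup>2 \<le> \<mu> * (norm v)\<^sup>2"
    using assms(2)[rule_format, of v] v by (simp add: power2_norm_eq_inner)
  then show ?thesis using v by simp
qed

lemma eigval_le_norm:
  assumes "\<mu> \<in> eigvals (A::real^'n^'n)"
  shows "\<mu> \<le> norm A"
proof -
  obtain v where v: "v \<noteq> 0" "A *v v = \<mu> *\<^sub>R v" using assms unfolding eigvals_def by auto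
  have "\<bar>\<mu>\<bar> * norm v \<le> norm A * norm v" using norm_matrix_vector_mult_le[of A v] v by simp
  then show ?thesis using v by simp
qed

lemma lam_min_le_quadratic_form:
  assumes sym: "transpose A = (A::real^'n^'n)"
  shows "lam_min A * (norm x)\<^sup>2 \<le> x \<bullet> (A *v x)"
proof -
  obtain v \<mu> where v: "v \<noteq> 0" "A *v v = \<mu> *\<^sub>R v" and min: "\<forall>x. \<mu> * (norm x)\<^sup>2 \<le> x \<bullet> (A *v x)"
    using symmetric_matrix_min_eigenvector[OF sym] by blast
  have "lam_min A \<le> \<mu>"
    using v by (intro lam_min_le_eigval[OF sym]) (auto simp: eigvals_def)
  then have "lam_min A * (norm x)\<^sup>2 \<le> \<mu> * (norm x)\<^sup>2" by (simp add: mult_right_mono)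
  also have "\<dots> \<le> x \<bullet> (A *v x)" using min by blast
  finally show ?thesis .
qed

lemma quadratic_form_le_lam_max:
  assumes sym: "transpose A = (A::real^'n^'n)"
  shows "x \<bullet> (A *v x) \<le> lam_max A * (norm x)\<^sup>2"
proof -
  have neg: "(- A) *v y = - (A *v y)" for y
    by (simp add: vec_eq_iff matrix_vector_mult_def sum_negf)
  have "transpose (- A) = - A" using sym by (simp add: transpose_def vec_eq_iff)
  then obtain v \<mu> where v: "v \<noteq> 0" "(- A) *v v = \<mu> *\<^sub>R v"
    and min: "\<forall>x. \<mu> * (norm x)\<^sup>2 \<le> x \<bullet> ((- A) *v x)"
    using symmetric_matrix_min_eigenvector by blast
  have "A *v v = (- \<mu>) *\<^sub>R v" using v(2) by (simp add: neg minus_equation_iff[of "A *v v"])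
  then have "- \<mu> \<le> lam_max A"
    using v(1) by (intro eigval_le_lam_max[OF sym]) (auto simp: eigvals_def)
  moreover have "x \<bullet> (A *v x) \<le> - \<mu> * (norm x)\<^sup>2" using min[rule_format, of x] by (simp add: neg)
  ultimately show ?thesis by (meson mult_right_mono order_trans zero_le_power2)
qed

lemma lam_max_nonneg:
  assumes sym: "transpose A = (A::real^'n^'n)" and psd: "\<forall>x. 0 \<le> x \<bullet> (A *v x)"
  shows "0 \<le> lam_max A"
  using psd eigval_ge_quadratic_bound[OF lam_max_in_eigvals[OF sym], of 0] by simp

text \<open>Polarisation: for \<open>A \<ge> 0\<close> and unit vectors \<open>x, y\<close>,
  \<open>4 x\<bullet>Ay = (x+y)\<bullet>A(x+y) - (x-y)\<bullet>A(x-y) \<le> lam_max A * \<parallel>x+y\<parallel>\<^sup>2 \<le> 4 lam_max A\<close>.\<close>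
lemma norm_matrix_vector_mult_le_lam_max:
  assumes sym: "transpose A = (A::real^'n^'n)" and psd: "\<forall>x. 0 \<le> x \<bullet> (A *v x)"
  shows "norm (A *v y) \<le> lam_max A * norm y"
proof -
  have bilinear: "x \<bullet> (A *v y) \<le> lam_max A" if "norm x = 1" "norm y = 1" for x y
  proof -
    have "4 * (x \<bullet> (A *v y)) = (x + y) \<bullet> (A *v (x + y)) - (x - y) \<bullet> (A *v (x - y))"
      using inner_symmetric_matrix[OF sym, of x y]
      by (simp add: matrix_vector_right_distrib matrix_vector_mult_diff_distrib inner_add inner_diff)
    also have "\<dots> \<le> lam_max A * (norm (x + y))\<^sup>2"
      using quadratic_form_le_lam_max[OF sym, of "x + y"] psd[rule_format, of "x - y"] by linarith
    also have "\<dots> \<le> lam_max A * 2\<^sup>2"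
    proof (rule mult_left_mono)
      have "norm (x + y) \<le> 2" using norm_triangle_ineq[of x y] that by simp
      then show "(norm (x + y))\<^sup>2 \<le> 2\<^sup>2" by (rule power_mono) simp
    qed (rule lam_max_nonneg[OF sym psd])
    finally show ?thesis by simp
  qed
  show ?thesis
  proof (cases "y = 0 \<or> A *v y = 0")
    case True
    then show ?thesis using lam_max_nonneg[OF sym psd] by auto
  next
    case False
    then have "(A *v y /\<^sub>R norm (A *v y)) \<bullet> (A *v (y /\<^sub>R norm y)) \<le> lam_max A"
      by (intro bilinear) auto
    then have "(A *v y) \<bullet> (A *v y) / (norm (A *v y) * norm y) \<le> lam_max A"
      by (simp add: matrix_vector_mult_scaleR divide_inverse mult_ac)
    then show ?thesis
      using False by (simp add: dot_square_norm power2_eq_square pos_divide_le_eq)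
  qed
qed

section \<open>Stacked vectors and bounds uniform in time\<close>

lemma sum_UNIV_Plus:
  "(\<Sum>i\<in>(UNIV::('a::finite + 'b::finite) set). g i) = (\<Sum>a\<in>UNIV. g (Inl a)) + (\<Sum>b\<in>UNIV. g (Inr b))"
  by (subst UNIV_Plus_UNIV[symmetric], subst sum.Plus) (simp_all add: comp_def)

lemma inner_stack: "stack x y \<bullet> stack u v = x \<bullet> u + y \<bullet> v"
  unfolding inner_vec_def stack_def by (simp add: sum_UNIV_Plus)

lemma norm_stack_power2: "(norm (stack x y))\<^sup>2 = (norm x)\<^sup>2 + (norm y)\<^sup>2"
  by (simp add: power2_norm_eq_inner inner_stack)

lemma block_diag_mult_stack: "block_diag A B *v stack x y = stack (A *v x) (B *v y)"
  unfolding block_diag_def stack_def matrix_vector_mult_def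
  by (simp add: vec_eq_iff sum_UNIV_Plus split: sum.splits)

lemma ex_stack: "\<exists>x y. z = stack x y"
  by (rule exI[of _ "\<chi> a. z $ Inl a"], rule exI[of _ "\<chi> b. z $ Inr b"])
     (simp add: stack_def vec_eq_iff split: sum.splits)

lemma transpose_block_diag: "transpose (block_diag A B) = block_diag (transpose A) (transpose B)"
  unfolding block_diag_def transpose_def by (simp add: vec_eq_iff split: sum.splits)

lemma norm_block_diag_power2: "(norm (block_diag A B))\<^sup>2 = (norm A)\<^sup>2 + (norm B)\<^sup>2"
  unfolding norm_vec_def L2_set_def block_diag_def
  by (simp add: sum_nonneg sum_UNIV_Plus)

lemma unif_pd_block_diag:
  assumes "unif_pd A" "unif_pd B"
  shows "unif_pd (\<lambda>t. block_diag (A t) (B t))"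
proof -
  obtain a b where ab: "a > 0" "b > 0"
    and A: "\<forall>t\<ge>0. \<forall>x. a * (norm x)\<^sup>2 \<le> x \<bullet> (A t *v x)"
    and B: "\<forall>t\<ge>0. \<forall>y. b * (norm y)\<^sup>2 \<le> y \<bullet> (B t *v y)"
    using assms unfolding unif_pd_def by blast
  have "min a b * (norm z)\<^sup>2 \<le> z \<bullet> (block_diag (A t) (B t) *v z)" if "t \<ge> 0" for t z
  proof -
    obtain x y where z: "z = stack x y" using ex_stack by blast
    have "min a b * (norm z)\<^sup>2 \<le> a * (norm x)\<^sup>2 + b * (norm y)\<^sup>2"
      by (simp add: z norm_stack_power2 distrib_left add_mono mult_right_mono)
    also have "\<dots> \<le> z \<bullet> (block_diag (A t) (B t) *v z)"
      using A B that by (simp add: z block_diag_mult_stack inner_stack add_mono)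
    finally show ?thesis .
  qed
  then show ?thesis unfolding unif_pd_def using ab by (intro exI[of _ "min a b"]) auto
qed

lemma unif_bdd_block_diag:
  assumes "unif_bdd A" "unif_bdd B"
  shows "unif_bdd (\<lambda>t. block_diag (A t) (B t))"
proof -
  obtain a b where A: "\<forall>t\<ge>0. norm (A t) \<le> a" and B: "\<forall>t\<ge>0. norm (B t) \<le> b"
    using assms unfolding unif_bdd_def by blast
  have "norm (block_diag (A t) (B t)) \<le> a + b" if "t \<ge> 0" for t
  proof (rule power2_le_imp_le)
    have "(norm (A t))\<^sup>2 + (norm (B t))\<^sup>2 \<le> (norm (A t) + norm (B t))\<^sup>2"
      by (simp add: power2_sum)
    also have "\<dots> \<le> (a + b)\<^sup>2" using A B that by (intro power_mono add_mono) auto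
    finally show "(norm (block_diag (A t) (B t)))\<^sup>2 \<le> (a + b)\<^sup>2"
      by (simp add: norm_block_diag_power2)
    show "0 \<le> a + b" using A B by (meson add_nonneg_nonneg norm_ge_zero order_trans order_refl)
  qed
  then show ?thesis unfolding unif_bdd_def by blast
qed

lemma unif_bdd_matrix_vector_mult:
  assumes "unif_bdd A" "unif_bdd x"
  shows "unif_bdd (\<lambda>t. (A t :: real^'n^'m) *v x t)"
proof -
  obtain a b where A: "\<forall>t\<ge>0. norm (A t) \<le> a" and x: "\<forall>t\<ge>0. norm (x t) \<le> b"
    using assms unfolding unif_bdd_def by blast
  have "norm (A t *v x t) \<le> a * b" if "t \<ge> 0" for t
    using norm_matrix_vector_mult_le[of "A t" "x t"] A x that
    by (meson mult_mono norm_ge_zero order_trans)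
  then show ?thesis unfolding unif_bdd_def by blast
qed

lemma norm_le_sup_norm:
  assumes "unif_bdd f" "t \<ge> 0"
  shows "norm (f t) \<le> sup_norm f"
proof -
  obtain B where "\<forall>t\<ge>0. norm (f t) \<le> B" using assms(1) unfolding unif_bdd_def by auto
  then have "bdd_above ((\<lambda>t. norm (f t)) ` {0..})" by (auto intro!: bdd_aboveI2)
  then show ?thesis unfolding sup_norm_def using assms(2) by (auto intro!: cSup_upper)
qed

lemma sup_norm_nonneg: "unif_bdd f \<Longrightarrow> 0 \<le> sup_norm f"
  using norm_le_sup_norm[of f 0] by (simp add: order_trans[OF norm_ge_zero])

lemma unif_bdd_quadratic_form_le:
  assumes "unif_bdd A"
  obtains m where "m > 0" "\<forall>t\<ge>0. \<forall>x. x \<bullet> ((A t :: real^'n^'n) *v x) \<le> m * (norm x)\<^sup>2"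
proof -
  obtain B where B: "\<forall>t\<ge>0. norm (A t) \<le> B" using assms unfolding unif_bdd_def by auto
  have "x \<bullet> (A t *v x) \<le> max B 1 * (norm x)\<^sup>2" if "t \<ge> 0" for t x
    using quadratic_form_le_norm[of x "A t"] B that
    by (meson max.cobounded1 mult_right_mono order_trans zero_le_power2)
  then show ?thesis using that[of "max B 1"] by auto
qed

lemma unif_pd_lam_min_all:
  assumes sym: "\<forall>t\<ge>0. transpose (A t) = (A t :: real^'n^'n)" and pd: "unif_pd A"
  shows lam_min_all_pos: "0 < lam_min_all A"
    and lam_min_all_le_quadratic_form: "t \<ge> 0 \<Longrightarrow> lam_min_all A * (norm x)\<^sup>2 \<le> x \<bullet> (A t *v x)"
proof -
  obtain c where c: "c > 0" "\<forall>t\<ge>0. \<forall>x. c * (norm x)\<^sup>2 \<le> x \<bullet> (A t *v x)"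
    using pd unfolding unif_pd_def by auto
  have c_le: "c \<le> lam_min (A t)" if "t \<ge> 0" for t
    using eigval_ge_quadratic_bound[OF lam_min_in_eigvals] sym c that by blast
  then have "c \<le> lam_min_all A"
    unfolding lam_min_all_def by (intro cInf_greatest) auto
  then show "0 < lam_min_all A" using c by linarith
  assume t: "t \<ge> 0"
  have "lam_min_all A \<le> lam_min (A t)"
    unfolding lam_min_all_def using c_le t by (intro cInf_lower bdd_belowI2) auto
  then have "lam_min_all A * (norm x)\<^sup>2 \<le> lam_min (A t) * (norm x)\<^sup>2"
    by (simp add: mult_right_mono)
  also have "\<dots> \<le> x \<bullet> (A t *v x)" using lam_min_le_quadratic_form sym t by blast
  finally show "lam_min_all A * (norm x)\<^sup>2 \<le> x \<bullet> (A t *v x)" .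
qed

lemma unif_pd_lam_max_all:
  assumes sym: "\<forall>t\<ge>0. transpose (A t) = (A t :: real^'n^'n)"
    and pd: "unif_pd A" and bdd: "unif_bdd A"
  shows lam_max_all_nonneg: "0 \<le> lam_max_all A"
    and norm_le_lam_max_all: "t \<ge> 0 \<Longrightarrow> norm (A t *v y) \<le> lam_max_all A * norm y"
proof -
  have psd: "\<forall>x. 0 \<le> x \<bullet> (A t *v x)" if "t \<ge> 0" for t
    using pd that unfolding unif_pd_def by (meson order_trans mult_nonneg_nonneg less_imp_le zero_le_power2)
  obtain B where B: "\<forall>t\<ge>0. norm (A t) \<le> B" using bdd unfolding unif_bdd_def by auto
  have "bdd_above ((\<lambda>t. lam_max (A t)) ` {0..})"
  proof (rule bdd_aboveI2)
    show "lam_max (A t) \<le> B" if "t \<in> {0..}" for t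
      using eigval_le_norm[OF lam_max_in_eigvals] sym B that by (meson atLeast_iff order_trans)
  qed
  then have le_all: "lam_max (A t) \<le> lam_max_all A" if "t \<ge> 0" for t
    unfolding lam_max_all_def using that by (intro cSup_upper) auto
  show "0 \<le> lam_max_all A"
    using lam_max_nonneg[of "A 0"] sym psd le_all[of 0] by auto
  assume t: "t \<ge> 0"
  have "norm (A t *v y) \<le> lam_max (A t) * norm y"
    using norm_matrix_vector_mult_le_lam_max sym psd t by blast
  also have "\<dots> \<le> lam_max_all A * norm y" using le_all[OF t] by (simp add: mult_right_mono)
  finally show "norm (A t *v y) \<le> lam_max_all A * norm y" .
qed

section \<open>A Lyapunov estimate\<close>

text \<open>Comparison principle: \<open>exp (\<gamma> t) (W t - B/\<gamma>)\<close> is non-increasing.\<close>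
lemma linear_differential_inequality:
  fixes W W' :: "real \<Rightarrow> real"
  assumes "\<gamma> > 0"
    and deriv: "\<forall>t\<ge>0. (W has_real_derivative W' t) (at t within {0..})"
    and ineq: "\<forall>t\<ge>0. W' t \<le> - \<gamma> * W t + B"
    and "T \<ge> 0"
  shows "W T \<le> exp (- \<gamma> * T) * (W 0 - B / \<gamma>) + B / \<gamma>"
proof -
  define g where "g t = exp (\<gamma> * t) * (W t - B / \<gamma>)" for t
  define g' where "g' t = exp (\<gamma> * t) * (\<gamma> * W t - B + W' t)" for t
  have g_deriv: "(g has_real_derivative g' t) (at t within {0..})" if "t \<ge> 0" for t
    unfolding g_def g'_def using deriv that \<open>\<gamma> > 0\<close>
    by (auto intro!: derivative_eq_intros simp: field_simps)
  have "g T \<le> g 0"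
  proof (rule DERIV_nonpos_imp_decreasing_open[OF \<open>T \<ge> 0\<close>])
    fix t :: real assume t: "0 < t" "t < T"
    have "(g has_real_derivative g' t) (at t within {0<..})"
      using g_deriv[of t] t by (auto intro: DERIV_subset)
    then have "(g has_real_derivative g' t) (at t)"
      using t at_within_open[of t "{0<..}"] by simp
    moreover have "\<gamma> * W t - B + W' t \<le> 0" using ineq[rule_format, of t] t by linarith
    then have "g' t \<le> 0" unfolding g'_def by (simp add: mult_nonneg_nonpos)
    ultimately show "\<exists>y. (g has_real_derivative y) (at t) \<and> y \<le> 0" by blast
  next
    have "continuous_on {0..} g"
      unfolding continuous_on_eq_continuous_within using g_deriv DERIV_continuous by (metis atLeast_iff)
    then show "continuous_on {0..T} g" by (rule continuous_on_subset) auto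
  qed
  then show ?thesis
    unfolding g_def by (simp add: exp_minus field_simps)
qed

text \<open>Young's inequality \<open>2 N D \<le> \<beta>/2 N\<^sup>2 + 2 D\<^sup>2/\<beta>\<close> and \<open>W \<le> m N\<^sup>2\<close> turn the dissipation
  inequality into \<open>W' \<le> -\<beta>/(2m) W + 2 D\<^sup>2/\<beta>\<close>.\<close>
lemma dissipation_exponential_bound:
  fixes W W' N :: "real \<Rightarrow> real"
  assumes "m > 0" "\<beta> > 0"
    and deriv: "\<forall>t\<ge>0. (W has_real_derivative W' t) (at t within {0..})"
    and dissipation: "\<forall>t\<ge>0. W' t \<le> - \<beta> * (N t)\<^sup>2 + 2 * N t * D"
    and upper: "\<forall>t\<ge>0. W t \<le> m * (N t)\<^sup>2" and "t \<ge> 0"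
  shows "W t \<le> exp (- (\<beta> / (2 * m)) * t) * \<bar>W 0\<bar> + 4 * m * D\<^sup>2 / \<beta>\<^sup>2"
proof -
  define \<gamma> where "\<gamma> = \<beta> / (2 * m)"
  have "\<gamma> > 0" using assms by (simp add: \<gamma>_def)
  have "W' t \<le> - \<gamma> * W t + 2 * D\<^sup>2 / \<beta>" if "t \<ge> 0" for t
  proof -
    have "0 \<le> (\<beta> * N t - 2 * D)\<^sup>2" by simp
    then have "4 * \<beta> * (N t * D) \<le> \<beta>\<^sup>2 * (N t)\<^sup>2 + 4 * D\<^sup>2"
      by (simp add: power2_eq_square algebra_simps)
    then have "2 * N t * D \<le> (\<beta>\<^sup>2 * (N t)\<^sup>2 + 4 * D\<^sup>2) / (2 * \<beta>)"
      using \<open>\<beta> > 0\<close> by (simp add: field_simps)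
    also have "\<dots> = \<beta> / 2 * (N t)\<^sup>2 + 2 * D\<^sup>2 / \<beta>"
      using \<open>\<beta> > 0\<close> by (simp add: field_simps power2_eq_square)
    finally have "2 * N t * D \<le> \<beta> / 2 * (N t)\<^sup>2 + 2 * D\<^sup>2 / \<beta>" .
    moreover have "\<gamma> * W t \<le> \<beta> / 2 * (N t)\<^sup>2"
      using upper that \<open>\<gamma> > 0\<close> \<open>m > 0\<close> by (simp add: \<gamma>_def field_simps)
    ultimately show ?thesis using dissipation that by fastforce
  qed
  then have "W t \<le> exp (- \<gamma> * t) * (W 0 - 2 * D\<^sup>2 / \<beta> / \<gamma>) + 2 * D\<^sup>2 / \<beta> / \<gamma>"
    using linear_differential_inequality[OF \<open>\<gamma> > 0\<close> deriv] \<open>t \<ge> 0\<close> by blast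
  also have "\<dots> \<le> exp (- \<gamma> * t) * \<bar>W 0\<bar> + 2 * D\<^sup>2 / \<beta> / \<gamma>"
  proof (intro add_right_mono mult_left_mono)
    have "0 \<le> 2 * D\<^sup>2 / \<beta> / \<gamma>" using \<open>\<beta> > 0\<close> \<open>\<gamma> > 0\<close> by simp
    then show "W 0 - 2 * D\<^sup>2 / \<beta> / \<gamma> \<le> \<bar>W 0\<bar>" by linarith
  qed simp
  also have "2 * D\<^sup>2 / \<beta> / \<gamma> = 4 * m * D\<^sup>2 / \<beta>\<^sup>2"
    using assms(1,2) by (simp add: \<gamma>_def field_simps power2_eq_square)
  finally show ?thesis unfolding \<gamma>_def .
qed

lemma lyapunov_ultimate_bound:
  fixes W W' N :: "real \<Rightarrow> real"
  assumes "L > 0" "m > 0" "\<beta> > 0" "\<alpha> > 0"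
    and rate: "\<alpha> \<le> \<beta> / (4 * m)" "\<alpha> \<le> \<beta> / (2 * sqrt (m * L))"
    and deriv: "\<forall>t\<ge>0. (W has_real_derivative W' t) (at t within {0..})"
    and dissipation: "\<forall>t\<ge>0. W' t \<le> - \<beta> * (N t)\<^sup>2 + 2 * N t * D"
    and lower: "\<forall>t\<ge>0. L * (N t)\<^sup>2 \<le> W t" and upper: "\<forall>t\<ge>0. W t \<le> m * (N t)\<^sup>2"
    and N_nonneg: "\<forall>t\<ge>0. N t \<ge> 0" and "D \<ge> 0" "t \<ge> 0"
  shows "N t \<le> sqrt (\<bar>W 0\<bar> / L) * exp (- \<alpha> * t) + D / (\<alpha> * L)"
proof -
  define \<gamma> where "\<gamma> = \<beta> / (2 * m)"
  have "L * (N t)\<^sup>2 \<le> exp (- \<gamma> * t) * \<bar>W 0\<bar> + 4 * m * D\<^sup>2 / \<beta>\<^sup>2"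
    using lower dissipation_exponential_bound[OF \<open>m > 0\<close> \<open>\<beta> > 0\<close> deriv dissipation upper \<open>t \<ge> 0\<close>]
      \<open>t \<ge> 0\<close> unfolding \<gamma>_def by fastforce
  then have "(N t)\<^sup>2 \<le> exp (- \<gamma> * t) * \<bar>W 0\<bar> / L + 4 * m * D\<^sup>2 / (\<beta>\<^sup>2 * L)"
    using \<open>L > 0\<close> by (simp add: field_simps)
  then have "N t \<le> sqrt (exp (- \<gamma> * t) * \<bar>W 0\<bar> / L + 4 * m * D\<^sup>2 / (\<beta>\<^sup>2 * L))"
    using N_nonneg \<open>t \<ge> 0\<close> by (simp add: real_le_rsqrt)
  also have "\<dots> \<le> sqrt (exp (- \<gamma> * t) * \<bar>W 0\<bar> / L) + sqrt (4 * m * D\<^sup>2 / (\<beta>\<^sup>2 * L))"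
    using assms(1-3) by (intro sqrt_add_le_add_sqrt) auto
  also have "sqrt (exp (- \<gamma> * t) * \<bar>W 0\<bar> / L) = sqrt (\<bar>W 0\<bar> / L) * exp (- \<gamma> * t / 2)"
  proof -
    have "sqrt (exp (- \<gamma> * t)) = exp (- \<gamma> * t / 2)"
      by (rule real_sqrt_unique) (simp_all add: power2_eq_square flip: exp_add)
    then show ?thesis by (simp add: real_sqrt_mult real_sqrt_divide)
  qed
  also have "\<dots> \<le> sqrt (\<bar>W 0\<bar> / L) * exp (- \<alpha> * t)"
  proof (rule mult_left_mono)
    have "\<alpha> * t \<le> \<gamma> / 2 * t"
      using rate(1) \<open>t \<ge> 0\<close> \<open>m > 0\<close> by (intro mult_right_mono) (simp_all add: \<gamma>_def field_simps)
    then show "exp (- \<gamma> * t / 2) \<le> exp (- \<alpha> * t)" by simp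
  qed (use \<open>L > 0\<close> in simp)
  also have "sqrt (4 * m * D\<^sup>2 / (\<beta>\<^sup>2 * L)) \<le> D / (\<alpha> * L)"
  proof (rule real_le_lsqrt)
    have "\<alpha> * (2 * sqrt (m * L)) \<le> \<beta>"
      using rate(2) assms(1,2) by (simp add: le_divide_eq mult_ac)
    then have "(\<alpha> * (2 * sqrt (m * L)))\<^sup>2 \<le> \<beta>\<^sup>2"
      using assms(1,2,4) by (intro power_mono) auto
    then have "4 * m * L * \<alpha>\<^sup>2 \<le> \<beta>\<^sup>2"
      using assms(1,2) by (simp add: power_mult_distrib mult_ac)
    then have "4 * m * L * \<alpha>\<^sup>2 * D\<^sup>2 \<le> \<beta>\<^sup>2 * D\<^sup>2"
      by (simp add: mult_right_mono)
    then show "4 * m * D\<^sup>2 / (\<beta>\<^sup>2 * L) \<le> (D / (\<alpha> * L))\<^sup>2"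
      using assms(1,3,4) by (simp add: field_simps power2_eq_square)
  qed (use assms(1,4) \<open>D \<ge> 0\<close> in simp_all)
  finally show ?thesis by simp
qed

section \<open>The closed loop\<close>

lemma has_real_derivative_quadratic_form:
  fixes A :: "real \<Rightarrow> real^'n^'n"
  assumes "(A has_vector_derivative A') (at t within S)" "(x has_vector_derivative x') (at t within S)"
  shows "((\<lambda>t. x t \<bullet> (A t *v x t)) has_real_derivative
      x t \<bullet> (A t *v x' + A' *v x t) + x' \<bullet> (A t *v x t)) (at t within S)"
proof -
  have "((\<lambda>t. A t *v x t) has_vector_derivative A t *v x' + A' *v x t) (at t within S)"
    using bounded_bilinear.has_vector_derivative[OF bounded_bilinear_matrix_vector_mult assms]
    by simp
  then show ?thesis
    using bounded_bilinear.has_vector_derivative[OF bounded_bilinear_inner assms(2)]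
    by (simp add: has_real_derivative_iff_has_vector_derivative)
qed

lemma sliding_energy_derivative:
  fixes M M' C K :: "real^'n^'n" and \<phi> :: "real^'h^'n"
  assumes "transpose M = M" and "transpose (M' - 2 *\<^sub>R C) = - (M' - 2 *\<^sub>R C)"
    and dynamics: "M *v s' + (C + K) *v s + \<phi> *v u = d"
  shows "s \<bullet> (M *v s' + M' *v s) + s' \<bullet> (M *v s)
    = 2 * (s \<bullet> d) - 2 * (s \<bullet> (K *v s)) - 2 * (s \<bullet> (\<phi> *v u))"
proof -
  have "s' \<bullet> (M *v s) = s \<bullet> (M *v s')" using inner_symmetric_matrix[OF assms(1)] by blast
  moreover have "s \<bullet> (M' *v s) = 2 * (s \<bullet> (C *v s))"
    using quadratic_form_skew_eq_0[OF assms(2), of s]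
    by (simp add: matrix_vector_mult_diff_rdistrib inner_diff_right flip: scaleR_matrix_vector_assoc)
  moreover have "M *v s' = d - C *v s - K *v s - \<phi> *v u"
    using dynamics by (simp add: matrix_vector_mult_add_rdistrib algebra_simps)
  ultimately show ?thesis by (simp add: inner_add_right inner_diff_right)
qed

lemma adaptation_energy_derivative:
  fixes P Q :: "real^'h^'h" and \<phi> :: "real^'h^'n" and Ri :: "real^'n^'n"
  assumes P_sym: "transpose P = P" and "invertible P"
    and dynamics: "P *v u' - transpose \<phi> *v s + (transpose \<phi> ** Ri ** \<phi> + lam *\<^sub>R P) *v u
      = transpose \<phi> *v (Ri *v \<epsilon>) - P *v (lam *\<^sub>R a) - P *v a'"
  defines "P' \<equiv> P ** ((2 * lam) *\<^sub>R matrix_inv P - Q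
      + matrix_inv P ** transpose \<phi> ** Ri ** \<phi> ** matrix_inv P) ** P"
  shows "u \<bullet> (P *v u' + P' *v u) + u' \<bullet> (P *v u)
    = 2 * (s \<bullet> (\<phi> *v u)) - (\<phi> *v u) \<bullet> (Ri *v (\<phi> *v u)) + 2 * (u \<bullet> (transpose \<phi> *v (Ri *v \<epsilon>)))
      - 2 * (u \<bullet> (P *v (lam *\<^sub>R a + a'))) - (P *v u) \<bullet> (Q *v (P *v u))"
proof -
  have PPi: "P *v (matrix_inv P *v y) = y" and PiP: "matrix_inv P *v (P *v y) = y" for y
    using invertible_matrix_inv[OF \<open>invertible P\<close>] by (simp_all add: matrix_vector_mul_assoc)
  have \<phi>_transpose: "u \<bullet> (transpose \<phi> *v y) = (\<phi> *v u) \<bullet> y" for y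
    using inner_matrix_vector_mult[of u "transpose \<phi>" y] by simp
  have "P' *v u = (2 * lam) *\<^sub>R (P *v u) - P *v (Q *v (P *v u)) + transpose \<phi> *v (Ri *v (\<phi> *v u))"
    unfolding P'_def
    by (simp add: matrix_vector_mul_assoc[symmetric] matrix_vector_mult_add_rdistrib
        matrix_vector_mult_diff_rdistrib matrix_vector_right_distrib matrix_vector_mult_diff_distrib
        matrix_vector_mult_scaleR PPi PiP flip: scaleR_matrix_vector_assoc)
  then have Riccati: "u \<bullet> (P' *v u)
      = 2 * lam * (u \<bullet> (P *v u)) - (P *v u) \<bullet> (Q *v (P *v u)) + (\<phi> *v u) \<bullet> (Ri *v (\<phi> *v u))"
    using inner_matrix_vector_mult[of u P "Q *v (P *v u)"]
    by (simp add: inner_diff_right inner_add_right \<phi>_transpose P_sym del: transpose_matrix_vector)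
  have "P *v u' = transpose \<phi> *v s - transpose \<phi> *v (Ri *v (\<phi> *v u)) - lam *\<^sub>R (P *v u)
      + transpose \<phi> *v (Ri *v \<epsilon>) - P *v (lam *\<^sub>R a) - P *v a'"
    using dynamics by (simp add: matrix_vector_mult_add_rdistrib matrix_vector_mul_assoc[symmetric]
        algebra_simps flip: scaleR_matrix_vector_assoc)
  then have "u \<bullet> (P *v u') = s \<bullet> (\<phi> *v u) - (\<phi> *v u) \<bullet> (Ri *v (\<phi> *v u)) - lam * (u \<bullet> (P *v u))
      + u \<bullet> (transpose \<phi> *v (Ri *v \<epsilon>)) - u \<bullet> (P *v (lam *\<^sub>R a + a'))"
    by (simp add: inner_diff_right inner_add_right \<phi>_transpose inner_commute[of s]
        matrix_vector_right_distrib del: transpose_matrix_vector)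
  moreover have "u' \<bullet> (P *v u) = u \<bullet> (P *v u')" using inner_symmetric_matrix[OF P_sym] by blast
  ultimately show ?thesis using Riccati by (simp add: inner_add_right)
qed

lemma closed_loop_dissipation_le:
  fixes K :: "real^'n^'n" and P Q :: "real^'h^'h" and \<phi> :: "real^'h^'n" and Ri :: "real^'n^'n"
  assumes K: "\<forall>x. cK * (norm x)\<^sup>2 \<le> x \<bullet> (K *v x)"
    and Q: "\<forall>y. cQ * (norm y)\<^sup>2 \<le> y \<bullet> (Q *v y)" and "cQ \<ge> 0"
    and P: "\<forall>y. cP * (norm y)\<^sup>2 \<le> y \<bullet> (P *v y)" and "cP \<ge> 0"
    and Ri: "\<forall>z. 0 \<le> z \<bullet> (Ri *v z)"
  shows "2 * (s \<bullet> d) - 2 * (s \<bullet> (K *v s)) + 2 * (u \<bullet> e) - 2 * (u \<bullet> (P *v w))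
      - (\<phi> *v u) \<bullet> (Ri *v (\<phi> *v u)) - (P *v u) \<bullet> (Q *v (P *v u))
    \<le> - min (2 * cK) (cQ * cP\<^sup>2) * (norm (stack s u))\<^sup>2
      + 2 * norm (stack s u) * (norm d + norm e + norm (P *v w))"
  (is "?lhs \<le> - ?\<beta> * ?N\<^sup>2 + 2 * ?N * ?D")
proof -
  have s_le: "norm s \<le> ?N" and u_le: "norm u \<le> ?N"
    using norm_stack_power2[of s u] by (simp_all add: real_le_rsqrt norm_eq_sqrt_inner power2_norm_eq_inner)
  have "cP * norm u \<le> norm (P *v u)" using P norm_matrix_vector_mult_ge by blast
  then have "cQ * (cP * norm u)\<^sup>2 \<le> cQ * (norm (P *v u))\<^sup>2"
    using \<open>cQ \<ge> 0\<close> \<open>cP \<ge> 0\<close> by (intro mult_left_mono power_mono) auto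
  then have "cQ * cP\<^sup>2 * (norm u)\<^sup>2 \<le> (P *v u) \<bullet> (Q *v (P *v u))"
    using Q[rule_format, of "P *v u"] by (simp add: power_mult_distrib mult.assoc)
  moreover have "cK * (norm s)\<^sup>2 \<le> s \<bullet> (K *v s)" using K by blast
  moreover have "- ?\<beta> * ?N\<^sup>2 \<ge> - 2 * cK * (norm s)\<^sup>2 - cQ * cP\<^sup>2 * (norm u)\<^sup>2"
  proof -
    have "?\<beta> * (norm s)\<^sup>2 \<le> 2 * cK * (norm s)\<^sup>2" "?\<beta> * (norm u)\<^sup>2 \<le> cQ * cP\<^sup>2 * (norm u)\<^sup>2"
      by (simp_all add: mult_right_mono)
    then show ?thesis unfolding norm_stack_power2 by (simp add: distrib_left)
  qed
  moreover have "s \<bullet> d \<le> ?N * norm d"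
    using norm_cauchy_schwarz[of s d] s_le by (meson mult_right_mono norm_ge_zero order_trans)
  moreover have "u \<bullet> e - u \<bullet> (P *v w) \<le> ?N * (norm e + norm (P *v w))"
  proof -
    have "u \<bullet> (e - P *v w) \<le> norm u * norm (e - P *v w)" by (rule norm_cauchy_schwarz)
    also have "\<dots> \<le> ?N * (norm e + norm (P *v w))"
      using u_le norm_triangle_ineq4 by (intro mult_mono) auto
    finally show ?thesis by (simp add: inner_diff_right)
  qed
  moreover have "0 \<le> (\<phi> *v u) \<bullet> (Ri *v (\<phi> *v u))" using Ri by blast
  ultimately show ?thesis by (simp add: algebra_simps)
qed

lemma closed_loop_energy_derivative_le:
  fixes M M' C K :: "real^'n^'n" and P Q :: "real^'h^'h" and \<phi> :: "real^'h^'n" and Ri :: "real^'n^'n"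
  assumes "transpose M = M" "transpose (M' - 2 *\<^sub>R C) = - (M' - 2 *\<^sub>R C)"
    and sliding: "M *v s' + (C + K) *v s + \<phi> *v u = d"
    and "transpose P = P"
    and adaptation: "P *v u' - transpose \<phi> *v s + (transpose \<phi> ** Ri ** \<phi> + lam *\<^sub>R P) *v u
      = transpose \<phi> *v (Ri *v \<epsilon>) - P *v (lam *\<^sub>R a) - P *v a'"
    and K: "\<forall>x. cK * (norm x)\<^sup>2 \<le> x \<bullet> (K *v x)"
    and Q: "\<forall>y. cQ * (norm y)\<^sup>2 \<le> y \<bullet> (Q *v y)" and "cQ \<ge> 0"
    and P: "\<forall>y. cP * (norm y)\<^sup>2 \<le> y \<bullet> (P *v y)" and "cP > 0"
    and Ri: "\<forall>z. 0 \<le> z \<bullet> (Ri *v z)"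
  defines "P' \<equiv> P ** ((2 * lam) *\<^sub>R matrix_inv P - Q
      + matrix_inv P ** transpose \<phi> ** Ri ** \<phi> ** matrix_inv P) ** P"
  shows "s \<bullet> (M *v s' + M' *v s) + s' \<bullet> (M *v s) + (u \<bullet> (P *v u' + P' *v u) + u' \<bullet> (P *v u))
    \<le> - min (2 * cK) (cQ * cP\<^sup>2) * (norm (stack s u))\<^sup>2 + 2 * norm (stack s u)
      * (norm d + norm (transpose \<phi> *v (Ri *v \<epsilon>)) + norm (P *v (lam *\<^sub>R a + a')))"
proof -
  have "invertible P"
  proof (intro pos_def_invertible allI impI)
    fix y :: "real^'h" assume "y \<noteq> 0"
    then have "0 < cP * (norm y)\<^sup>2" using \<open>cP > 0\<close> by simp
    then show "0 < y \<bullet> (P *v y)" using P by (meson less_le_trans)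
  qed
  then show ?thesis
    using sliding_energy_derivative[OF assms(1,2) sliding]
      adaptation_energy_derivative[OF \<open>transpose P = P\<close> _ adaptation, of Q]
      closed_loop_dissipation_le[OF K Q \<open>cQ \<ge> 0\<close> P _ Ri, of s d u "transpose \<phi> *v (Ri *v \<epsilon>)"
        "lam *\<^sub>R a + a'" \<phi>] \<open>cP > 0\<close>
    unfolding P'_def by simp
qed

lemma closed_loop_ultimate_bound:
  fixes M M' K C :: "real \<Rightarrow> real^'n^'n" and Q Pinv :: "real \<Rightarrow> real^'h^'h"
    and \<phi> :: "real \<Rightarrow> real^'h^'n" and R :: "real^'n^'n"
    and s s' d \<epsilon> :: "real \<Rightarrow> real^'n" and atil atil' a a' :: "real \<Rightarrow> real^'h"
  assumes M_sym: "\<forall>t\<ge>0. transpose (M t) = M t"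
    and M_deriv: "\<forall>t\<ge>0. (M has_vector_derivative M' t) (at t within {0..})"
    and K_ge: "\<forall>t\<ge>0. \<forall>x. cK * (norm x)\<^sup>2 \<le> x \<bullet> (K t *v x)"
    and Q_ge: "\<forall>t\<ge>0. \<forall>y. cQ * (norm y)\<^sup>2 \<le> y \<bullet> (Q t *v y)"
    and R_pd: "\<forall>x. x \<noteq> 0 \<longrightarrow> x \<bullet> (R *v x) > 0"
    and phi_bdd: "unif_bdd \<phi>"
    and Pinv_sym: "\<forall>t\<ge>0. transpose (Pinv t) = Pinv t"
    and Pinv_ge: "\<forall>t\<ge>0. \<forall>y. cP * (norm y)\<^sup>2 \<le> y \<bullet> (Pinv t *v y)"
    and Pinv_le: "\<forall>t\<ge>0. \<forall>y. norm (Pinv t *v y) \<le> Lmax * norm y" and "Lmax \<ge> 0"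
    and Pinv_deriv: "\<forall>t\<ge>0. (Pinv has_vector_derivative
          (Pinv t ** ((2 * lam) *\<^sub>R matrix_inv (Pinv t) - Q t
             + matrix_inv (Pinv t) ** transpose (\<phi> t) ** matrix_inv R ** \<phi> t ** matrix_inv (Pinv t))
           ** Pinv t)) (at t within {0..})"
    and block_ge: "\<forall>t\<ge>0. \<forall>z. L * (norm z)\<^sup>2 \<le> z \<bullet> (block_diag (M t) (Pinv t) *v z)"
    and block_le: "\<forall>t\<ge>0. \<forall>z. z \<bullet> (block_diag (M t) (Pinv t) *v z) \<le> m * (norm z)\<^sup>2"
    and "cK > 0" "cQ > 0" "cP > 0" "L > 0" "m > 0" "\<alpha> > 0"
    and rate: "\<alpha> \<le> min (2 * cK) (cQ * cP\<^sup>2) / (4 * m)"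
      "\<alpha> \<le> min (2 * cK) (cQ * cP\<^sup>2) / (2 * sqrt (m * L))"
    and skew: "\<forall>t\<ge>0. transpose (M' t - 2 *\<^sub>R C t) = - (M' t - 2 *\<^sub>R C t)"
    and s_deriv: "\<forall>t\<ge>0. (s has_vector_derivative s' t) (at t within {0..})"
    and atil_deriv: "\<forall>t\<ge>0. (atil has_vector_derivative atil' t) (at t within {0..})"
    and d_bdd: "unif_bdd d" and eps_bdd: "unif_bdd \<epsilon>"
    and w_bdd: "unif_bdd (\<lambda>t. lam *\<^sub>R a t + a' t)"
    and sliding: "\<forall>t\<ge>0. M t *v s' t + (C t + K t) *v s t + \<phi> t *v atil t = d t"
    and adaptation: "\<forall>t\<ge>0. Pinv t *v atil' t - transpose (\<phi> t) *v s t
              + (transpose (\<phi> t) ** matrix_inv R ** \<phi> t + lam *\<^sub>R Pinv t) *v atil t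
            = transpose (\<phi> t) *v (matrix_inv R *v \<epsilon> t)
              - Pinv t *v (lam *\<^sub>R a t) - Pinv t *v a' t"
  defines "e \<equiv> \<lambda>t. transpose (\<phi> t) *v (matrix_inv R *v \<epsilon> t)"
    and "w \<equiv> \<lambda>t. lam *\<^sub>R a t + a' t"
  shows "\<exists>c. \<forall>t\<ge>0. norm (stack (s t) (atil t)) \<le> c * exp (- \<alpha> * t)
    + 1 / (\<alpha> * L) * (sup_norm d + sup_norm e + Lmax * sup_norm w)"
proof -
  define P' where "P' t = Pinv t ** ((2 * lam) *\<^sub>R matrix_inv (Pinv t) - Q t
    + matrix_inv (Pinv t) ** transpose (\<phi> t) ** matrix_inv R ** \<phi> t ** matrix_inv (Pinv t)) ** Pinv t" for t
  define N where "N t = norm (stack (s t) (atil t))" for t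
  define W where "W t = s t \<bullet> (M t *v s t) + atil t \<bullet> (Pinv t *v atil t)" for t
  define W' where "W' t = s t \<bullet> (M t *v s' t + M' t *v s t) + s' t \<bullet> (M t *v s t)
    + (atil t \<bullet> (Pinv t *v atil' t + P' t *v atil t) + atil' t \<bullet> (Pinv t *v atil t))" for t
  define D where "D = sup_norm d + sup_norm e + Lmax * sup_norm w"
  have W_block: "W t = stack (s t) (atil t) \<bullet> (block_diag (M t) (Pinv t) *v stack (s t) (atil t))" for t
    by (simp add: W_def block_diag_mult_stack inner_stack)
  have e_bdd: "unif_bdd e"
    unfolding e_def using phi_bdd eps_bdd
    by (intro unif_bdd_matrix_vector_mult) (auto simp: unif_bdd_def norm_transpose)
  have W_deriv: "\<forall>t\<ge>0. (W has_real_derivative W' t) (at t within {0..})"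
  proof (intro allI impI)
    fix t :: real assume "t \<ge> 0"
    then show "(W has_real_derivative W' t) (at t within {0..})"
      unfolding W_def W'_def P'_def
      by (intro DERIV_add has_real_derivative_quadratic_form M_deriv[rule_format] s_deriv[rule_format]
          Pinv_deriv[rule_format] atil_deriv[rule_format])
  qed
  have dissipation: "\<forall>t\<ge>0. W' t \<le> - min (2 * cK) (cQ * cP\<^sup>2) * (N t)\<^sup>2 + 2 * N t * D"
  proof (intro allI impI)
    fix t :: real assume t: "t \<ge> 0"
    have "W' t \<le> - min (2 * cK) (cQ * cP\<^sup>2) * (N t)\<^sup>2
        + 2 * N t * (norm (d t) + norm (e t) + norm (Pinv t *v w t))"
      unfolding W'_def P'_def N_def e_def w_def
      using K_ge Q_ge Pinv_ge t \<open>cQ > 0\<close> \<open>cP > 0\<close> pos_def_matrix_inv_nonneg[OF R_pd]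
      by (intro closed_loop_energy_derivative_le[OF M_sym[rule_format] skew[rule_format]
            sliding[rule_format] Pinv_sym[rule_format] adaptation[rule_format]]) auto
    also have "\<dots> \<le> - min (2 * cK) (cQ * cP\<^sup>2) * (N t)\<^sup>2 + 2 * N t * D"
    proof -
      have "norm (Pinv t *v w t) \<le> Lmax * sup_norm w"
        using Pinv_le norm_le_sup_norm[OF w_bdd[folded w_def] t] t \<open>Lmax \<ge> 0\<close>
        by (meson mult_left_mono order_trans)
      then have "norm (d t) + norm (e t) + norm (Pinv t *v w t) \<le> D"
        unfolding D_def using norm_le_sup_norm[OF d_bdd t] norm_le_sup_norm[OF e_bdd t] by linarith
      then show ?thesis by (simp add: N_def mult_left_mono)
    qed
    finally show "W' t \<le> - min (2 * cK) (cQ * cP\<^sup>2) * (N t)\<^sup>2 + 2 * N t * D" .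
  qed
  have "0 \<le> D"
    unfolding D_def w_def
    using sup_norm_nonneg[OF d_bdd] sup_norm_nonneg[OF e_bdd] sup_norm_nonneg[OF w_bdd] \<open>Lmax \<ge> 0\<close>
    by simp
  moreover have "0 < min (2 * cK) (cQ * cP\<^sup>2)" using \<open>cK > 0\<close> \<open>cQ > 0\<close> \<open>cP > 0\<close> by simp
  moreover have "\<forall>t\<ge>0. L * (N t)\<^sup>2 \<le> W t" "\<forall>t\<ge>0. W t \<le> m * (N t)\<^sup>2"
    using block_ge block_le by (simp_all add: W_block N_def)
  ultimately have "N t \<le> sqrt (\<bar>W 0\<bar> / L) * exp (- \<alpha> * t) + D / (\<alpha> * L)" if "t \<ge> 0" for t
    using lyapunov_ultimate_bound[OF \<open>L > 0\<close> \<open>m > 0\<close> _ \<open>\<alpha> > 0\<close> rate W_deriv dissipation] that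
    by (simp add: N_def)
  then show ?thesis unfolding N_def D_def by (intro exI[of _ "sqrt (\<bar>W 0\<bar> / L)"]) (simp add: mult.commute)
qed

theorem theorem3:
  fixes M M' K :: "real \<Rightarrow> real^'n^'n"
    and Q Pinv :: "real \<Rightarrow> real^'h^'h"
    and \<phi> :: "real \<Rightarrow> real^'h^'n"
    and R :: "real^'n^'n"
    and lam :: real
  assumes M_sym: "\<forall>t\<ge>0. transpose (M t) = M t"
    and M_pd: "unif_pd M" and M_bdd: "unif_bdd M"
    and M_deriv: "\<forall>t\<ge>0. (M has_vector_derivative M' t) (at t within {0..})"
    and K_pd: "unif_pd K" and K_bdd: "unif_bdd K"
    and Q_pd: "unif_pd Q"
    and R_pd: "\<forall>x. x \<noteq> 0 \<longrightarrow> x \<bullet> (R *v x) > 0"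
    and phi_bdd: "unif_bdd \<phi>"
    and lam_nonneg: "lam \<ge> 0"
    and Pinv_sym: "\<forall>t\<ge>0. transpose (Pinv t) = Pinv t"
    and Pinv_pd: "unif_pd Pinv" and Pinv_bdd: "unif_bdd Pinv"
    and Pinv_deriv: "\<forall>t\<ge>0. (Pinv has_vector_derivative
          (Pinv t ** ((2 * lam) *\<^sub>R matrix_inv (Pinv t) - Q t
             + matrix_inv (Pinv t) ** transpose (\<phi> t) ** matrix_inv R ** \<phi> t ** matrix_inv (Pinv t))
           ** Pinv t)) (at t within {0..})"
  shows "\<exists>\<alpha>>0. \<forall>(C :: real \<Rightarrow> real^'n^'n) (s :: real \<Rightarrow> real^'n) s' (atil :: real \<Rightarrow> real^'h) atil'
                   (d :: real \<Rightarrow> real^'n) (\<epsilon> :: real \<Rightarrow> real^'n) (a :: real \<Rightarrow> real^'h) a'.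
      (\<forall>t\<ge>0. transpose (M' t - 2 *\<^sub>R C t) = - (M' t - 2 *\<^sub>R C t))
    \<and> (\<forall>t\<ge>0. (s has_vector_derivative s' t) (at t within {0..}))
    \<and> (\<forall>t\<ge>0. (atil has_vector_derivative atil' t) (at t within {0..}))
    \<and> (\<forall>t\<ge>0. (a has_vector_derivative a' t) (at t within {0..}))
    \<and> unif_bdd d \<and> unif_bdd \<epsilon>
    \<and> unif_bdd (\<lambda>t. lam *\<^sub>R a t + a' t)
    \<and> (\<forall>t\<ge>0. M t *v s' t + (C t + K t) *v s t + \<phi> t *v atil t = d t)
    \<and> (\<forall>t\<ge>0. Pinv t *v atil' t - transpose (\<phi> t) *v s t
              + (transpose (\<phi> t) ** matrix_inv R ** \<phi> t + lam *\<^sub>R Pinv t) *v atil t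
            = transpose (\<phi> t) *v (matrix_inv R *v \<epsilon> t)
              - Pinv t *v (lam *\<^sub>R a t) - Pinv t *v a' t)
    \<longrightarrow> (\<exists>c. \<forall>t\<ge>0. norm (stack (s t) (atil t)) \<le> c * exp (- \<alpha> * t)
          + (1 / (\<alpha> * lam_min_all (\<lambda>t. block_diag (M t) (Pinv t))))
            * (sup_norm d + sup_norm (\<lambda>t. transpose (\<phi> t) *v (matrix_inv R *v \<epsilon> t))
               + lam_max_all Pinv * sup_norm (\<lambda>t. lam *\<^sub>R a t + a' t)))"
proof -
  let ?B = "\<lambda>t. block_diag (M t) (Pinv t)"
  have B_sym: "\<forall>t\<ge>0. transpose (?B t) = ?B t"
    using M_sym Pinv_sym by (simp add: transpose_block_diag)
  have B_pd: "unif_pd ?B" using M_pd Pinv_pd by (rule unif_pd_block_diag)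
  obtain m where "m > 0" and B_le: "\<forall>t\<ge>0. \<forall>z. z \<bullet> (?B t *v z) \<le> m * (norm z)\<^sup>2"
    using unif_bdd_quadratic_form_le[OF unif_bdd_block_diag[OF M_bdd Pinv_bdd]] by blast
  obtain cK cQ cP where "cK > 0" "cQ > 0" "cP > 0"
    and K_ge: "\<forall>t\<ge>0. \<forall>x. cK * (norm x)\<^sup>2 \<le> x \<bullet> (K t *v x)"
    and Q_ge: "\<forall>t\<ge>0. \<forall>y. cQ * (norm y)\<^sup>2 \<le> y \<bullet> (Q t *v y)"
    and Pinv_ge: "\<forall>t\<ge>0. \<forall>y. cP * (norm y)\<^sup>2 \<le> y \<bullet> (Pinv t *v y)"
    using K_pd Q_pd Pinv_pd unfolding unif_pd_def by blast
  define L where "L = lam_min_all ?B"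
  define \<beta> where "\<beta> = min (2 * cK) (cQ * cP\<^sup>2)"
  define \<alpha> where "\<alpha> = min (\<beta> / (4 * m)) (\<beta> / (2 * sqrt (m * L)))"
  have "L > 0" unfolding L_def using B_sym B_pd by (rule lam_min_all_pos)
  then have "\<alpha> > 0" using \<open>m > 0\<close> \<open>cK > 0\<close> \<open>cQ > 0\<close> \<open>cP > 0\<close> by (simp add: \<alpha>_def \<beta>_def)
  have B_ge: "\<forall>t\<ge>0. \<forall>z. L * (norm z)\<^sup>2 \<le> z \<bullet> (?B t *v z)"
    unfolding L_def using lam_min_all_le_quadratic_form[OF B_sym B_pd] by blast
  have Pinv_le: "\<forall>t\<ge>0. \<forall>y. norm (Pinv t *v y) \<le> lam_max_all Pinv * norm y"
    using norm_le_lam_max_all[OF Pinv_sym Pinv_pd Pinv_bdd] by blast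
  have rate: "\<alpha> \<le> \<beta> / (4 * m)" "\<alpha> \<le> \<beta> / (2 * sqrt (m * L))" by (simp_all add: \<alpha>_def)
  note bound = closed_loop_ultimate_bound[OF M_sym M_deriv K_ge Q_ge R_pd phi_bdd Pinv_sym Pinv_ge Pinv_le
      lam_max_all_nonneg[OF Pinv_sym Pinv_pd Pinv_bdd] Pinv_deriv B_ge B_le \<open>cK > 0\<close> \<open>cQ > 0\<close> \<open>cP > 0\<close>
      \<open>L > 0\<close> \<open>m > 0\<close> \<open>\<alpha> > 0\<close> rate[unfolded \<beta>_def]]
  show ?thesis
    unfolding L_def[symmetric]
    by (rule exI[of _ \<alpha>], intro conjI allI impI \<open>\<alpha> > 0\<close>, elim conjE) (rule bound)
qed

end
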